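(* Let $n\ge1$, $m\ge0$ and let $v,u$ be vertices of $Y_{n,m}$. Then $v-u$ is a vertex of $Z_{n,m}$ and $d_{Y_{n,m}}(v,u)=d_{Z_{n,m}}(v-u,0)$.
   Context: The Yoke graph $Y_{n,m}$ has vertices the tuples $v=(v_0,\dots,v_{m+1})$ with $v_0,v_{m+1}\in\mathbb{Z}_n$, $v_1,\dots,v_m\in\{0,1\}$, $\sum v_i\equiv0\pmod n$; the dYoke graph $Z_{n,m}$ is defined identically but with $v_1,\dots,v_m\in\{-1,0,1\}$. In both, $u\sim v$ iff there is $0\le i\le m$ with $u_j=v_j$ for $j\notin\{i,i+1\}$ and either ($u_i=v_i+1$, $u_{i+1}=v_{i+1}-1$) or ($u_i=v_i-1$, $u_{i+1}=v_{i+1}+1$), bucket entries computed mod $n$. The difference $v-u$ is taken entrywise (buckets mod $n$), and $0$ is the all-zero vertex. *)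

theory Defs
  imports Main "HOL-Library.Extended_Nat"
begin

text \<open>A vertex is a function v :: nat => int with positions 0..m+1; positions beyond
  m+1 are fixed to 0. Positions 0 and m+1 are buckets in Z_n, represented by the
  canonical residues 0..n-1. Middle entries range over the set S
  ({0,1} for the Yoke graph, {-1,0,1} for the dYoke graph).\<close>

definition is_bucket :: "nat \<Rightarrow> nat \<Rightarrow> bool" where
  "is_bucket m j \<longleftrightarrow> j = 0 \<or> j = m + 1"

definition gvert :: "int set \<Rightarrow> nat \<Rightarrow> nat \<Rightarrow> (nat \<Rightarrow> int) set" where
  "gvert S n m = {v. (\<forall>j. j > m + 1 \<longrightarrow> v j = 0)
      \<and> v 0 \<in> {0..<int n} \<and> v (m + 1) \<in> {0..<int n}
      \<and> (\<forall>j. 1 \<le> j \<and> j \<le> m \<longrightarrow> v j \<in> S)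
      \<and> (\<Sum>j\<le>m+1. v j) mod int n = 0}"

definition Yvert :: "nat \<Rightarrow> nat \<Rightarrow> (nat \<Rightarrow> int) set" where
  "Yvert n m = gvert {0, 1} n m"

definition Zvert :: "nat \<Rightarrow> nat \<Rightarrow> (nat \<Rightarrow> int) set" where
  "Zvert n m = gvert {-1, 0, 1} n m"

definition eqpos :: "nat \<Rightarrow> nat \<Rightarrow> nat \<Rightarrow> int \<Rightarrow> int \<Rightarrow> bool" where
  "eqpos n m j a b \<longleftrightarrow> (if is_bucket m j then a mod int n = b mod int n else a = b)"

definition gadj :: "int set \<Rightarrow> nat \<Rightarrow> nat \<Rightarrow> (nat \<Rightarrow> int) \<Rightarrow> (nat \<Rightarrow> int) \<Rightarrow> bool" where
  "gadj S n m u v \<longleftrightarrow> u \<in> gvert S n m \<and> v \<in> gvert S n m \<and>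
     (\<exists>i\<le>m. (\<forall>j\<le>m+1. j \<noteq> i \<and> j \<noteq> Suc i \<longrightarrow> u j = v j) \<and>
        ((eqpos n m i (u i) (v i + 1) \<and> eqpos n m (Suc i) (u (Suc i)) (v (Suc i) - 1)) \<or>
         (eqpos n m i (u i) (v i - 1) \<and> eqpos n m (Suc i) (u (Suc i)) (v (Suc i) + 1))))"

definition gdist :: "int set \<Rightarrow> nat \<Rightarrow> nat \<Rightarrow> (nat \<Rightarrow> int) \<Rightarrow> (nat \<Rightarrow> int) \<Rightarrow> enat" where
  "gdist S n m x y = (INF k \<in> {k. \<exists>p :: nat \<Rightarrow> nat \<Rightarrow> int.
       p 0 = x \<and> p k = y \<and> x \<in> gvert S n m \<and> y \<in> gvert S n m \<and>
       (\<forall>i<k. gadj S n m (p i) (p (Suc i)))}. enat k)"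

definition distY :: "nat \<Rightarrow> nat \<Rightarrow> (nat \<Rightarrow> int) \<Rightarrow> (nat \<Rightarrow> int) \<Rightarrow> enat" where
  "distY n m = gdist {0, 1} n m"

definition distZ :: "nat \<Rightarrow> nat \<Rightarrow> (nat \<Rightarrow> int) \<Rightarrow> (nat \<Rightarrow> int) \<Rightarrow> enat" where
  "distZ n m = gdist {-1, 0, 1} n m"

definition vdiff :: "nat \<Rightarrow> nat \<Rightarrow> (nat \<Rightarrow> int) \<Rightarrow> (nat \<Rightarrow> int) \<Rightarrow> (nat \<Rightarrow> int)" where
  "vdiff n m v u = (\<lambda>j. if is_bucket m j then (v j - u j) mod int n
                        else if j \<le> m then v j - u j else 0)"

definition zerov :: "nat \<Rightarrow> int" where
  "zerov = (\<lambda>_. 0)"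

end

theory Submission
  imports Defs
begin

text \<open>
  Encode a vertex w of Z_{n,m} by its prefix sums y_j = w_0 + ... + w_j (j \<le> m): y_j is
  the net number of units that must cross the edge between positions j and j+1 to reach 0,
  up to a multiple of n absorbed by the buckets. Moving a unit across that edge changes y_j by
  \<plusminus>1 and no other prefix sum, except that reducing the first bucket mod n shifts all of
  them by the same multiple of n. Hence \<Phi>(w) = min_k \<Sigma>_j |y_j - k n|, the minimum over k of
  potential n m w k, drops by at most one per step of Z_{n,m} and vanishes at 0, so d_Z(w, 0) \<ge> \<Phi>(w). Conversely, for Yoke vertices
  v \<noteq> u some legal Yoke move decreases \<Phi>(v - u) by exactly one, so d_Y(v, u) \<le> \<Phi>(v - u);
  and subtracting u turns Yoke walks from v to u into dYoke walks from v - u to 0.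
\<close>

definition walk :: "int set \<Rightarrow> nat \<Rightarrow> nat \<Rightarrow> (nat \<Rightarrow> nat \<Rightarrow> int) \<Rightarrow> nat \<Rightarrow> bool" where
  "walk S n m p len \<longleftrightarrow> (\<forall>i<len. gadj S n m (p i) (p (Suc i)))"

lemma walk_Suc_iff:
  "walk S n m p (Suc len) \<longleftrightarrow> gadj S n m (p 0) (p 1) \<and> walk S n m (\<lambda>i. p (Suc i)) len"
  unfolding walk_def by (auto simp: less_Suc_eq_0_disj)

lemma gdist_le_gdist:
  assumes "x' \<in> gvert S' n m" "y' \<in> gvert S' n m"
    and "\<And>p len. p 0 = x \<Longrightarrow> p len = y \<Longrightarrow> walk S n m p len \<Longrightarrow>
           \<exists>q len'. len' \<le> len \<and> q 0 = x' \<and> q len' = y' \<and> walk S' n m q len'"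
  shows "gdist S' n m x' y' \<le> gdist S n m x y"
  unfolding gdist_def
proof (rule INF_greatest)
  fix len
  assume "len \<in> {k. \<exists>p. p 0 = x \<and> p k = y \<and> x \<in> gvert S n m \<and> y \<in> gvert S n m \<and>
                      (\<forall>i<k. gadj S n m (p i) (p (Suc i)))}"
  then obtain q len' where "len' \<le> len" "q 0 = x'" "q len' = y'" "walk S' n m q len'"
    using assms(3) unfolding walk_def by blast
  with assms(1,2) show "(INF k\<in>{k. \<exists>q. q 0 = x' \<and> q k = y' \<and> x' \<in> gvert S' n m \<and> y' \<in> gvert S' n m \<and>
                      (\<forall>i<k. gadj S' n m (q i) (q (Suc i)))}. enat k) \<le> enat len"
    unfolding walk_def by (intro INF_lower2[of len']) auto
qed

lemma gvert_n_pos: "v \<in> gvert S n m \<Longrightarrow> n > 0"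
  by (auto simp: gvert_def)

lemma YvertD:
  assumes "v \<in> Yvert n m"
  shows "\<And>j. j > m + 1 \<Longrightarrow> v j = 0" "v 0 \<in> {0..<int n}" "v (m + 1) \<in> {0..<int n}"
    "\<And>j. 1 \<le> j \<Longrightarrow> j \<le> m \<Longrightarrow> v j \<in> {0, 1}" "int n dvd (\<Sum>j\<le>m+1. v j)"
  using assms by (auto simp: Yvert_def gvert_def)

lemma residue_eq_of_dvd_diff:
  "a \<in> {0..<int n} \<Longrightarrow> b \<in> {0..<int n} \<Longrightarrow> int n dvd a - b \<Longrightarrow> a = b"
  by (metis atLeastLessThan_iff mod_eq_dvd_iff mod_pos_pos_trivial)

definition prefix_sum :: "(nat \<Rightarrow> int) \<Rightarrow> nat \<Rightarrow> int" where
  "prefix_sum w j = (\<Sum>l\<le>j. w l)"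

definition potential :: "nat \<Rightarrow> nat \<Rightarrow> (nat \<Rightarrow> int) \<Rightarrow> int \<Rightarrow> int" where
  "potential n m w k = (\<Sum>j\<le>m. \<bar>prefix_sum w j - k * int n\<bar>)"

lemma prefix_sum_0 [simp]: "prefix_sum w 0 = w 0"
  by (simp add: prefix_sum_def)

lemma prefix_sum_Suc: "prefix_sum w (Suc j) = prefix_sum w j + w (Suc j)"
  by (simp add: prefix_sum_def)

lemma potential_nonneg: "potential n m w k \<ge> 0"
  by (simp add: potential_def sum_nonneg)

lemma potential_zerov [simp]: "potential n m zerov 0 = 0"
  by (simp add: potential_def prefix_sum_def zerov_def)

lemma prefix_sum_unit_step:
  assumes step: "\<And>l. l \<le> m \<Longrightarrow> a l = b l + (if l = 0 then C * int n else 0)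
                    + (if l = i then e else 0) - (if l = Suc i then e else 0)"
    and "j \<le> m"
  shows "prefix_sum a j = prefix_sum b j + C * int n + (if j = i then e else 0)"
  using \<open>j \<le> m\<close> by (induction j) (auto simp: step prefix_sum_Suc)

lemma potential_unit_step:
  assumes "i \<le> m"
    and step: "\<And>l. l \<le> m \<Longrightarrow> a l = b l + (if l = 0 then C * int n else 0)
                    + (if l = i then e else 0) - (if l = Suc i then e else 0)"
  shows "potential n m a (k + C) = potential n m b k
           + \<bar>prefix_sum b i - k * int n + e\<bar> - \<bar>prefix_sum b i - k * int n\<bar>"
proof -
  let ?y = "\<lambda>j. prefix_sum b j - k * int n"
  have "potential n m a (k + C) = (\<Sum>j\<le>m. \<bar>?y j\<bar> + (if j = i then \<bar>?y i + e\<bar> - \<bar>?y i\<bar> else 0))"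
    unfolding potential_def
    by (rule sum.cong) (auto simp: prefix_sum_unit_step[OF step] algebra_simps)
  also have "\<dots> = potential n m b k + \<bar>?y i + e\<bar> - \<bar>?y i\<bar>"
    using assms(1) by (simp add: sum.distrib potential_def)
  finally show ?thesis .
qed

lemma potential_bucket_shift:
  assumes "\<And>l. l \<le> m \<Longrightarrow> a l = b l + (if l = 0 then C * int n else 0)"
  shows "potential n m a (k + C) = potential n m b k"
  using potential_unit_step[of 0 m a b C n 0 k] assms by simp

lemma gadj_unit_step:
  assumes "gadj S n m w w'"
  obtains i e C where "i \<le> m" "\<bar>e\<bar> = 1"
    "\<And>l. l \<le> m \<Longrightarrow> w l = w' l + (if l = 0 then C * int n else 0)
                    + (if l = i then e else 0) - (if l = Suc i then e else 0)"
proof -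
  from assms obtain i where i: "i \<le> m"
    and same: "\<forall>j\<le>m+1. j \<noteq> i \<and> j \<noteq> Suc i \<longrightarrow> w j = w' j"
    and moved: "(eqpos n m i (w i) (w' i + 1) \<and> eqpos n m (Suc i) (w (Suc i)) (w' (Suc i) - 1)) \<or>
         (eqpos n m i (w i) (w' i - 1) \<and> eqpos n m (Suc i) (w (Suc i)) (w' (Suc i) + 1))"
    unfolding gadj_def by blast
  obtain e where e: "\<bar>e\<bar> = 1" and
    at_i: "eqpos n m i (w i) (w' i + e)" and
    at_Suc_i: "eqpos n m (Suc i) (w (Suc i)) (w' (Suc i) - e)"
    using moved by (metis abs_minus abs_one add_uminus_conv_diff diff_minus_eq_add)
  obtain C where C: "w 0 = w' 0 + C * int n + (if i = 0 then e else 0)"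
  proof (cases "i = 0")
    case True
    with at_i have "int n dvd w 0 - (w' 0 + e)"
      by (simp add: eqpos_def is_bucket_def mod_eq_dvd_iff)
    then obtain C where "w 0 - (w' 0 + e) = int n * C" by (elim dvdE)
    with True show ?thesis by (intro that[of C]) (simp add: algebra_simps)
  next
    case False
    with same show ?thesis by (intro that[of 0]) simp
  qed
  have "w l = w' l + (if l = 0 then C * int n else 0) + (if l = i then e else 0) - (if l = Suc i then e else 0)"
    if "l \<le> m" for l
  proof (cases "l = 0")
    case True
    with C show ?thesis by auto
  next
    case False
    with that have "\<not> is_bucket m l" by (simp add: is_bucket_def)
    with False that same at_i at_Suc_i show ?thesis by (auto simp: eqpos_def)
  qed
  with i e show thesis by (rule that)
qed

lemma potential_gadj_le:
  assumes "gadj S n m w w'"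
  obtains k where "potential n m w k \<le> potential n m w' k' + 1"
proof -
  obtain i e C where "i \<le> m" "\<bar>e\<bar> = 1"
    and step: "\<And>l. l \<le> m \<Longrightarrow> w l = w' l + (if l = 0 then C * int n else 0)
                    + (if l = i then e else 0) - (if l = Suc i then e else 0)"
    using gadj_unit_step[OF assms] by blast
  from potential_unit_step[OF \<open>i \<le> m\<close> step, of k'] \<open>\<bar>e\<bar> = 1\<close>
  show thesis by (intro that[of "k' + C"]) linarith
qed

lemma potential_walk_le:
  "walk S n m p len \<Longrightarrow> \<exists>k. potential n m (p 0) k \<le> potential n m (p len) k' + int len"
proof (induction len arbitrary: p)
  case 0
  show ?case by auto
next
  case (Suc len)
  then obtain k1 where "potential n m (p 1) k1 \<le> potential n m (p (Suc len)) k' + int len"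
    using Suc.IH[of "\<lambda>i. p (Suc i)"] by (auto simp: walk_Suc_iff)
  moreover obtain k where "potential n m (p 0) k \<le> potential n m (p 1) k1 + 1"
    using Suc.prems by (auto simp: walk_Suc_iff elim: potential_gadj_le)
  ultimately have "potential n m (p 0) k \<le> potential n m (p (Suc len)) k' + int (Suc len)"
    by simp
  then show ?case ..
qed

lemma vdiff_self: "vdiff n m u u = zerov"
  by (auto simp: vdiff_def zerov_def)

lemma vdiff_in_Zvert:
  assumes v: "v \<in> Yvert n m" and u: "u \<in> Yvert n m"
  shows "vdiff n m v u \<in> Zvert n m"
proof -
  have "n > 0" using v by (auto simp: Yvert_def dest: gvert_n_pos)
  have "(\<Sum>j\<le>m+1. vdiff n m v u j) mod int n = (\<Sum>j\<le>m+1. v j - u j) mod int n"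
    by (subst (1 2) mod_sum_eq[symmetric], rule arg_cong[where f = "\<lambda>x. x mod int n"],
        rule sum.cong) (auto simp: vdiff_def is_bucket_def)
  also have "\<dots> = 0"
    using YvertD(5)[OF v] YvertD(5)[OF u] by (simp add: sum_subtractf)
  finally have sum: "(\<Sum>j\<le>m+1. vdiff n m v u j) mod int n = 0" .
  have middle: "vdiff n m v u j \<in> {-1, 0, 1}" if "1 \<le> j" "j \<le> m" for j
    using YvertD(4)[OF v that] YvertD(4)[OF u that] that by (auto simp: vdiff_def is_bucket_def)
  have buckets: "vdiff n m v u j \<in> {0..<int n}" if "is_bucket m j" for j
    using that \<open>n > 0\<close> by (simp add: vdiff_def)
  have outside: "vdiff n m v u j = 0" if "j > m + 1" for j
    using that by (simp add: vdiff_def is_bucket_def)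
  show ?thesis
    using sum middle buckets[of 0] buckets[of "m + 1"] outside
    by (simp add: Zvert_def gvert_def is_bucket_def)
qed

lemma potential_vdiff:
  "potential n m (vdiff n m v u) (k - (v 0 - u 0) div int n) = potential n m (v - u) k"
proof -
  have "vdiff n m v u l = (v - u) l + (if l = 0 then - ((v 0 - u 0) div int n) * int n else 0)"
    if "l \<le> m" for l
    using that by (auto simp: vdiff_def is_bucket_def minus_div_mult_eq_mod[symmetric])
  from potential_bucket_shift[where m = m and k = k, OF this] show ?thesis by (simp add: fun_diff_def)
qed

lemma eqpos_vdiff:
  assumes "eqpos n m j (a j) (b j + e)" "j \<le> m + 1"
  shows "eqpos n m j (vdiff n m a u j) (vdiff n m b u j + e)"
proof (cases "is_bucket m j")
  case True
  with assms(1) have "(a j - u j) mod int n = (b j - u j + e) mod int n"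
    by (simp add: eqpos_def mod_eq_dvd_iff algebra_simps)
  with True show ?thesis by (simp add: eqpos_def vdiff_def mod_simps)
next
  case False
  with assms show ?thesis by (auto simp: eqpos_def vdiff_def is_bucket_def)
qed

lemma vdiff_gadj:
  assumes "gadj {0, 1} n m a b" and u: "u \<in> Yvert n m"
  shows "gadj {-1, 0, 1} n m (vdiff n m a u) (vdiff n m b u)"
proof -
  have "a \<in> Yvert n m" "b \<in> Yvert n m" using assms(1) by (simp_all add: gadj_def Yvert_def)
  then have Z: "vdiff n m a u \<in> Zvert n m" "vdiff n m b u \<in> Zvert n m"
    using u by (simp_all add: vdiff_in_Zvert)
  from assms(1) obtain i where i: "i \<le> m"
    and same: "\<forall>j\<le>m+1. j \<noteq> i \<and> j \<noteq> Suc i \<longrightarrow> a j = b j"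
    and moved: "(eqpos n m i (a i) (b i + 1) \<and> eqpos n m (Suc i) (a (Suc i)) (b (Suc i) + - 1)) \<or>
         (eqpos n m i (a i) (b i + - 1) \<and> eqpos n m (Suc i) (a (Suc i)) (b (Suc i) + 1))"
    unfolding gadj_def by auto
  have "\<forall>j\<le>m+1. j \<noteq> i \<and> j \<noteq> Suc i \<longrightarrow> vdiff n m a u j = vdiff n m b u j"
    using same by (simp add: vdiff_def)
  moreover have "i \<le> m + 1" "Suc i \<le> m + 1" using i by simp_all
  then have "(eqpos n m i (vdiff n m a u i) (vdiff n m b u i + 1) \<and>
              eqpos n m (Suc i) (vdiff n m a u (Suc i)) (vdiff n m b u (Suc i) + - 1)) \<or>
             (eqpos n m i (vdiff n m a u i) (vdiff n m b u i + - 1) \<and>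
              eqpos n m (Suc i) (vdiff n m a u (Suc i)) (vdiff n m b u (Suc i) + 1))"
    using moved eqpos_vdiff[where u = u] by blast
  ultimately show ?thesis
    using Z i unfolding gadj_def Zvert_def by (intro conjI exI[of _ i]) simp_all
qed

lemma gvert_eq_of_potential_eq_0:
  assumes v: "v \<in> gvert S n m" and u: "u \<in> gvert S n m"
    and "potential n m (v - u) k = 0"
  shows "v = u"
proof -
  have "prefix_sum (v - u) j = k * int n" if "j \<le> m" for j
    using assms(3) that unfolding potential_def by (subst (asm) sum_nonneg_eq_0_iff) auto
  moreover have "v 0 = u 0"
    using v u calculation[of 0] by (intro residue_eq_of_dvd_diff) (auto simp: gvert_def)
  ultimately have prefix_0: "prefix_sum (v - u) j = 0" if "j \<le> m" for j
    using that by force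
  have "v j = u j" if "j \<le> m" for j
  proof (cases j)
    case (Suc i)
    then show ?thesis using prefix_0[of i] prefix_0[of j] that by (simp add: prefix_sum_Suc)
  qed (use \<open>v 0 = u 0\<close> in simp)
  moreover have "v (m + 1) = u (m + 1)"
  proof (rule residue_eq_of_dvd_diff)
    have "int n dvd (\<Sum>j\<le>m+1. v j) - (\<Sum>j\<le>m+1. u j)"
      using v u by (auto simp: gvert_def)
    also have "(\<Sum>j\<le>m+1. v j) - (\<Sum>j\<le>m+1. u j) = prefix_sum (v - u) m + (v (m + 1) - u (m + 1))"
      by (simp add: prefix_sum_def sum_subtractf)
    finally show "int n dvd v (m + 1) - u (m + 1)" using prefix_0[of m] by simp
  qed (use v u in \<open>auto simp: gvert_def\<close>)
  moreover have "v j = u j" if "j > m + 1" for j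
    using v u that by (simp add: gvert_def)
  ultimately show ?thesis
    by (metis Suc_eq_plus1 le_SucE linorder_not_less ext)
qed

definition bucket_mod :: "nat \<Rightarrow> nat \<Rightarrow> nat \<Rightarrow> int \<Rightarrow> int" where
  "bucket_mod n m j x = (if is_bucket m j then x mod int n else x)"

definition unit_move :: "nat \<Rightarrow> nat \<Rightarrow> (nat \<Rightarrow> int) \<Rightarrow> nat \<Rightarrow> int \<Rightarrow> nat \<Rightarrow> int" where
  "unit_move n m v i d j =
     (if j = i then bucket_mod n m j (v j - d)
      else if j = Suc i then bucket_mod n m j (v j + d) else v j)"

definition legal_move :: "nat \<Rightarrow> (nat \<Rightarrow> int) \<Rightarrow> nat \<Rightarrow> int \<Rightarrow> bool" where
  "legal_move m v i d \<longleftrightarrow> i \<le> m \<and> (i = 0 \<or> v i - d \<in> {0, 1}) \<and> (i = m \<or> v (Suc i) + d \<in> {0, 1})"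

lemma unit_move_in_Yvert:
  assumes v: "v \<in> Yvert n m" and move: "legal_move m v i d"
  shows "unit_move n m v i d \<in> Yvert n m"
proof -
  have "n > 0" using v by (auto simp: Yvert_def dest: gvert_n_pos)
  have "(\<Sum>j\<le>m+1. unit_move n m v i d j) mod int n
        = (\<Sum>j\<le>m+1. v j - (if j = i then d else 0) + (if j = Suc i then d else 0)) mod int n"
    by (subst (1 2) mod_sum_eq[symmetric], rule arg_cong[where f = "\<lambda>x. x mod int n"],
        rule sum.cong) (auto simp: unit_move_def bucket_mod_def mod_simps)
  also have "\<dots> = (\<Sum>j\<le>m+1. v j) mod int n"
    using move by (simp add: sum.distrib sum_subtractf legal_move_def)
  also have "\<dots> = 0"
    using v by (simp add: Yvert_def gvert_def)
  finally have sum: "(\<Sum>j\<le>m+1. unit_move n m v i d j) mod int n = 0" .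
  have middle: "unit_move n m v i d j \<in> {0, 1}" if "1 \<le> j" "j \<le> m" for j
    using YvertD(4)[OF v that] that move
    by (auto simp: unit_move_def bucket_mod_def is_bucket_def legal_move_def)
  have buckets: "unit_move n m v i d j \<in> {0..<int n}" if "is_bucket m j" for j
    using that \<open>n > 0\<close> YvertD(2,3)[OF v]
    by (auto simp: unit_move_def bucket_mod_def is_bucket_def)
  have outside: "unit_move n m v i d j = 0" if "j > m + 1" for j
    using that move YvertD(1)[OF v] by (auto simp: unit_move_def legal_move_def)
  show ?thesis
    using sum middle buckets[of 0] buckets[of "m + 1"] outside
    by (simp add: Yvert_def gvert_def is_bucket_def)
qed

lemma gadj_unit_move:
  assumes v: "v \<in> Yvert n m" and move: "legal_move m v i d" and d: "\<bar>d\<bar> = 1"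
  shows "gadj {0, 1} n m v (unit_move n m v i d)"
proof -
  have "eqpos n m i (v i) (unit_move n m v i d i + d)"
    "eqpos n m (Suc i) (v (Suc i)) (unit_move n m v i d (Suc i) - d)"
    by (auto simp: eqpos_def unit_move_def bucket_mod_def mod_simps)
  moreover have "\<forall>j\<le>m+1. j \<noteq> i \<and> j \<noteq> Suc i \<longrightarrow> v j = unit_move n m v i d j"
    by (simp add: unit_move_def)
  moreover have "d = 1 \<or> d = -1" using d by auto
  moreover have "i \<le> m" using move by (simp add: legal_move_def)
  ultimately show ?thesis
    using unit_move_in_Yvert[OF v move] v unfolding gadj_def Yvert_def by auto
qed

lemma potential_unit_move:
  assumes "i \<le> m"
  obtains C where "potential n m (unit_move n m v i d - u) (k + C) = potential n m (v - u) k
    + \<bar>prefix_sum (v - u) i - k * int n - d\<bar> - \<bar>prefix_sum (v - u) i - k * int n\<bar>"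
proof -
  define C where "C = (if i = 0 then - ((v 0 - d) div int n) else 0)"
  have "(unit_move n m v i d - u) l = (v - u) l + (if l = 0 then C * int n else 0)
          + (if l = i then - d else 0) - (if l = Suc i then - d else 0)" if "l \<le> m" for l
    using that by (auto simp: C_def unit_move_def bucket_mod_def is_bucket_def
        minus_div_mult_eq_mod[symmetric])
  from potential_unit_step[OF assms this] show thesis
    unfolding add_uminus_conv_diff by (rule that)
qed

text \<open>
  Let d y_t > 0 with y = prefix_sum (v - u) - k n. An entry v_j (1 \<le> j \<le> m) that cannot
  receive d, or cannot give up d, is extreme in the corresponding direction, so d (v_j - u_j)
  has a known sign. Hence scanning right from t past entries that cannot receive d, and then
  left past entries that cannot give up d, keeps d y positive and ends at a legal move.
\<close>

lemma legal_sink_exists: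
  assumes v: "v \<in> Yvert n m" and u: "u \<in> Yvert n m" and d: "\<bar>d\<bar> = 1"
  shows "t \<le> m \<Longrightarrow> d * (prefix_sum (v - u) t - k * int n) > 0 \<Longrightarrow>
    \<exists>t'\<le>m. d * (prefix_sum (v - u) t' - k * int n) > 0 \<and> (t' = m \<or> v (Suc t') + d \<in> {0, 1})"
proof (induction "m - t" arbitrary: t)
  case 0
  then show ?case by auto
next
  case (Suc r)
  show ?case
  proof (cases "v (Suc t) + d \<in> {0, 1}")
    case True
    with Suc.prems show ?thesis by blast
  next
    case False
    have "Suc t \<le> m" using Suc.hyps(2) by simp
    with YvertD(4)[OF v] YvertD(4)[OF u] have "v (Suc t) \<in> {0, 1}" "u (Suc t) \<in> {0, 1}" by auto
    with False d have "d * (v (Suc t) - u (Suc t)) \<ge> 0" by auto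
    moreover have "d * (prefix_sum (v - u) (Suc t) - k * int n)
        = d * (prefix_sum (v - u) t - k * int n) + d * (v (Suc t) - u (Suc t))"
      by (simp add: prefix_sum_Suc algebra_simps)
    ultimately have "d * (prefix_sum (v - u) (Suc t) - k * int n) > 0"
      using Suc.prems(2) by linarith
    with Suc.hyps(1)[of "Suc t"] Suc.hyps(2) \<open>Suc t \<le> m\<close> show ?thesis by simp
  qed
qed

lemma legal_move_exists:
  assumes v: "v \<in> Yvert n m" and u: "u \<in> Yvert n m" and d: "\<bar>d\<bar> = 1"
  shows "t \<le> m \<Longrightarrow> d * (prefix_sum (v - u) t - k * int n) > 0 \<Longrightarrow> (t = m \<or> v (Suc t) + d \<in> {0, 1}) \<Longrightarrow>
    \<exists>i. legal_move m v i d \<and> d * (prefix_sum (v - u) i - k * int n) > 0"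
proof (induction t)
  case 0
  then show ?case by (auto simp: legal_move_def)
next
  case (Suc t)
  show ?case
  proof (cases "v (Suc t) - d \<in> {0, 1}")
    case True
    with Suc.prems show ?thesis by (auto simp: legal_move_def)
  next
    case False
    from Suc.prems(1) YvertD(4)[OF v] YvertD(4)[OF u]
    have "v (Suc t) \<in> {0, 1}" "u (Suc t) \<in> {0, 1}" by auto
    with False d have "d * (v (Suc t) - u (Suc t)) \<le> 0" "v (Suc t) + d \<in> {0, 1}" by auto
    moreover have "d * (prefix_sum (v - u) (Suc t) - k * int n)
        = d * (prefix_sum (v - u) t - k * int n) + d * (v (Suc t) - u (Suc t))"
      by (simp add: prefix_sum_Suc algebra_simps)
    ultimately have "d * (prefix_sum (v - u) t - k * int n) > 0"
      using Suc.prems(2) by linarith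
    with Suc.IH Suc.prems(1) \<open>v (Suc t) + d \<in> {0, 1}\<close> show ?thesis by (meson Suc_leD)
  qed
qed

lemma descending_move_exists:
  assumes v: "v \<in> Yvert n m" and u: "u \<in> Yvert n m" and "potential n m (v - u) k \<noteq> 0"
  obtains i d where "legal_move m v i d" "\<bar>d\<bar> = 1" "d * (prefix_sum (v - u) i - k * int n) > 0"
proof -
  let ?y = "\<lambda>j. prefix_sum (v - u) j - k * int n"
  obtain t where t: "t \<le> m" "?y t \<noteq> 0"
  proof (rule ccontr)
    assume "\<not> thesis"
    with that have "\<forall>j\<le>m. ?y j = 0" by blast
    then have "potential n m (v - u) k = 0" by (simp add: potential_def)
    with assms(3) show False ..
  qed
  define d :: int where "d = sgn (?y t)"
  have d: "\<bar>d\<bar> = 1" "d * ?y t > 0"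
    using t(2) by (auto simp: d_def sgn_if)
  obtain t' where "t' \<le> m" "d * ?y t' > 0" "t' = m \<or> v (Suc t') + d \<in> {0, 1}"
    using legal_sink_exists[OF v u d(1) t(1) d(2)] by blast
  then obtain i where "legal_move m v i d" "d * ?y i > 0"
    using legal_move_exists[OF v u d(1)] by blast
  with d(1) that show thesis by blast
qed

lemma Yvert_walk_of_potential:
  assumes "v \<in> Yvert n m" "u \<in> Yvert n m" "potential n m (v - u) k \<le> int T"
  shows "\<exists>p len. len \<le> T \<and> p 0 = v \<and> p len = u \<and> walk {0, 1} n m p len"
  using assms
proof (induction T arbitrary: v k)
  case 0
  then have "potential n m (v - u) k = 0"
    using potential_nonneg[of n m "v - u" k] by linarith
  with 0(1,2) have "v = u"
    unfolding Yvert_def by (rule gvert_eq_of_potential_eq_0)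
  then show ?case by (intro exI[of _ "\<lambda>_. u"] exI[of _ 0]) (simp add: walk_def)
next
  case (Suc T)
  show ?case
  proof (cases "potential n m (v - u) k = 0")
    case True
    with Suc.prems(1,2) have "v = u"
      unfolding Yvert_def by (rule gvert_eq_of_potential_eq_0)
    then show ?thesis by (intro exI[of _ "\<lambda>_. u"] exI[of _ 0]) (simp add: walk_def)
  next
    case False
    obtain i d where move: "legal_move m v i d" and d: "\<bar>d\<bar> = 1"
      and descent: "d * (prefix_sum (v - u) i - k * int n) > 0"
      using descending_move_exists[OF Suc.prems(1,2) False] .
    obtain C where "potential n m (unit_move n m v i d - u) (k + C) = potential n m (v - u) k
      + \<bar>prefix_sum (v - u) i - k * int n - d\<bar> - \<bar>prefix_sum (v - u) i - k * int n\<bar>"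
      using potential_unit_move move unfolding legal_move_def by blast
    moreover have "\<bar>prefix_sum (v - u) i - k * int n - d\<bar> = \<bar>prefix_sum (v - u) i - k * int n\<bar> - 1"
      using d descent by (auto simp: abs_if zero_less_mult_iff)
    ultimately have "potential n m (unit_move n m v i d - u) (k + C) \<le> int T"
      using Suc.prems(3) by linarith
    with Suc.IH unit_move_in_Yvert[OF Suc.prems(1) move] Suc.prems(2)
    obtain p len where "len \<le> T" "p 0 = unit_move n m v i d" "p len = u" "walk {0, 1} n m p len"
      by blast
    with gadj_unit_move[OF Suc.prems(1) move d] show ?thesis
      by (intro exI[of _ "case_nat v p"] exI[of _ "Suc len"]) (simp add: walk_Suc_iff)
  qed
qed

theorem lemma5p21:
  fixes n m :: nat and v u :: "nat \<Rightarrow> int"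
  assumes "n \<ge> 1"
    and "v \<in> Yvert n m" and "u \<in> Yvert n m"
  shows "vdiff n m v u \<in> Zvert n m \<and> distY n m v u = distZ n m (vdiff n m v u) zerov"
proof -
  note v = assms(2) and u = assms(3)
  let ?w = "vdiff n m v u"
  have w: "?w \<in> Zvert n m" using v u by (rule vdiff_in_Zvert)
  have zero: "zerov \<in> Zvert n m" using vdiff_in_Zvert[OF u u] by (simp add: vdiff_self)
  have "distZ n m ?w zerov \<le> distY n m v u"
    unfolding distZ_def distY_def
  proof (rule gdist_le_gdist)
    fix p len assume "p 0 = v" "p len = u" "walk {0, 1} n m p len"
    with vdiff_gadj[OF _ u] show "\<exists>q len'. len' \<le> len \<and> q 0 = ?w \<and> q len' = zerov \<and> walk {-1, 0, 1} n m q len'"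
      by (intro exI[of _ "\<lambda>i. vdiff n m (p i) u"] exI[of _ len]) (auto simp: walk_def vdiff_self)
  qed (use w zero in \<open>simp_all add: Zvert_def\<close>)
  moreover have "distY n m v u \<le> distZ n m ?w zerov"
    unfolding distZ_def distY_def
  proof (rule gdist_le_gdist)
    fix q len assume "q 0 = ?w" "q len = zerov" "walk {-1, 0, 1} n m q len"
    then obtain k where "potential n m ?w k \<le> int len"
      using potential_walk_le[where k' = 0] by fastforce
    then have "potential n m (v - u) (k + (v 0 - u 0) div int n) \<le> int len"
      using potential_vdiff[of n m v u "k + (v 0 - u 0) div int n"] by simp
    with v u show "\<exists>p len'. len' \<le> len \<and> p 0 = v \<and> p len' = u \<and> walk {0, 1} n m p len'"
      by (rule Yvert_walk_of_potential)
  qed (use v u in \<open>simp_all add: Yvert_def\<close>)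
  ultimately show ?thesis using w by simp
qed

end
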